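(* Let $A$ be an $N\times N$ $(0,1)$-matrix such that every row and every column contains at least $N-2$ ones. Then, for all $N\geq 400$, $\operatorname{perm}(A)>\frac{1}{7.5}N!$.
   Context: $\operatorname{perm}(A)=\sum_{\pi\in\Sigma_N}\prod_{i=1}^N a_{i\pi(i)}$ is the permanent. *)

theory Defs
  imports Complex_Main "HOL-Combinatorics.Permutations"
begin

definition permanent :: "nat \<Rightarrow> (nat \<Rightarrow> nat \<Rightarrow> real) \<Rightarrow> real" where
  "permanent N A = (\<Sum>\<pi>\<in>{\<pi>. \<pi> permutes {0..<N}}. \<Prod>i<N. A i (\<pi> i))"

end

theory Submission
  imports Defs
begin

text \<open>Sort the permutations by the number \<open>m\<close> of zero entries they pick up; for a
  (0,1)-matrix the permanent is the number \<open>N\<^sub>0\<close> of permutations picking up none.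
  Since every row has at most two zeros, a random permutation picks up at most two zeros
  on average, which gives \<open>\<Sum>m<7. (7 - m) N\<^sub>m \<ge> 5 N!\<close>. Composing a permutation with
  the transposition of a row \<open>i\<close> where it picks up a zero and a suitable row \<open>i'\<close>
  removes that zero without creating new ones; double counting these switches yields
  \<open>m (N - m - 2) N\<^sub>m \<le> 2 (N - m + 1) N\<^bsub>m-1\<^esub>\<close>, hence \<open>N\<^sub>m \<le> c\<^sup>m / m! N\<^sub>0\<close> with
  \<open>c = 395/196\<close> for \<open>m \<le> 6\<close>. As \<open>\<Sum>m<7. (7 - m) c\<^sup>m / m! < 37.5\<close>, this forces
  \<open>N\<^sub>0 > N! / 7.5\<close>.\<close>

definition zero_hits :: "(nat \<Rightarrow> nat \<Rightarrow> 'a::zero) \<Rightarrow> nat \<Rightarrow> (nat \<Rightarrow> nat) \<Rightarrow> nat set" where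
  "zero_hits A n p = {i. i < n \<and> A i (p i) = 0}"

definition perms_hitting :: "(nat \<Rightarrow> nat \<Rightarrow> 'a::zero) \<Rightarrow> nat \<Rightarrow> nat \<Rightarrow> (nat \<Rightarrow> nat) set" where
  "perms_hitting A n m = {p. p permutes {0..<n} \<and> card (zero_hits A n p) = m}"

lemma finite_zero_hits [simp]: "finite (zero_hits A n p)"
  by (simp add: zero_hits_def)

lemma finite_perms_hitting [simp]: "finite (perms_hitting A n m)"
  by (rule finite_subset[of _ "{p. p permutes {0..<n}}"])
    (auto simp: perms_hitting_def finite_permutations)

lemma card_permutes_with_value:
  assumes "finite S" "i \<in> S" "j \<in> S"
  shows "card {p. p permutes S \<and> p i = j} = fact (card S - 1)"
proof -
  let ?swap = "\<lambda>q. Transposition.transpose i j \<circ> q"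
  have swap_image: "{p. p permutes S \<and> p i = j} = ?swap ` {q. q permutes S - {i}}"
  proof (intro set_eqI iffI)
    fix p assume p: "p \<in> {p. p permutes S \<and> p i = j}"
    then have "?swap p permutes S"
      using assms by (auto intro: permutes_compose permutes_swap_id)
    then have "?swap p permutes S - {i}"
      by (rule permutes_superset) (use p in auto)
    moreover have "p = ?swap (?swap p)"
      by (simp add: comp_assoc[symmetric])
    ultimately show "p \<in> ?swap ` {q. q permutes S - {i}}" by blast
  next
    fix p assume "p \<in> ?swap ` {q. q permutes S - {i}}"
    then obtain q where q: "q permutes S - {i}" and p: "p = ?swap q" by auto
    have "q permutes S" by (rule permutes_subset[OF q]) auto
    moreover have "q i = i" using permutes_not_in[OF q] by simp
    ultimately show "p \<in> {p. p permutes S \<and> p i = j}"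
      using assms p by (auto intro: permutes_compose permutes_swap_id)
  qed
  have "inj ?swap"
    by (rule injI) (metis comp_assoc transpose_comp_involutory id_comp)
  then have "card {p. p permutes S \<and> p i = j} = card {q. q permutes S - {i}}"
    unfolding swap_image by (rule card_image[OF inj_on_subset]) simp
  also have "\<dots> = fact (card S - 1)"
    using assms by (intro card_permutations) auto
  finally show ?thesis .
qed

lemma card_permutes_value_in:
  assumes "finite S" "i \<in> S" "T \<subseteq> S"
  shows "card {p. p permutes S \<and> p i \<in> T} = card T * fact (card S - 1)"
proof -
  have "finite T" using assms finite_subset by blast
  have "{p. p permutes S \<and> p i \<in> T} = (\<Union>j\<in>T. {p. p permutes S \<and> p i = j})" by auto
  also have "card \<dots> = (\<Sum>j\<in>T. card {p. p permutes S \<and> p i = j})"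
    using \<open>finite T\<close> assms(1) by (intro card_UN_disjoint) (auto simp: finite_permutations)
  also have "\<dots> = card T * fact (card S - 1)"
    using assms by (simp add: card_permutes_with_value subsetD)
  finally show ?thesis .
qed

lemma card_permutes_preimage:
  assumes "p permutes S"
  shows "card {x \<in> S. P (p x)} = card {y \<in> S. P y}"
proof -
  have "{x \<in> S. P (p x)} = p -` {y \<in> S. P y}"
    using permutes_in_image[OF assms] by auto
  then show ?thesis
    using assms by (metis card_vimage_inj permutes_inj permutes_surj top_greatest)
qed

lemma sum_card_zero_hits_le:
  assumes rows: "\<forall>i<n. card {j. j < n \<and> A i j = 0} \<le> k"
  shows "(\<Sum>p | p permutes {0..<n}. card (zero_hits A n p)) \<le> k * fact n"
proof -
  let ?P = "{p. p permutes {0..<n}}"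
  have "(\<Sum>p\<in>?P. card (zero_hits A n p)) = (\<Sum>p\<in>?P. \<Sum>i<n. of_bool (A i (p i) = 0))"
    by (simp add: zero_hits_def Int_def)
  also have "\<dots> = (\<Sum>i<n. \<Sum>p\<in>?P. of_bool (A i (p i) = 0))"
    by (rule sum.swap)
  also have "\<dots> = (\<Sum>i<n. card {p. p permutes {0..<n} \<and> p i \<in> {j. j < n \<and> A i j = 0}})"
  proof (rule sum.cong[OF refl])
    fix i assume "i \<in> {..<n}"
    have "?P \<inter> {p. A i (p i) = 0} = {p. p permutes {0..<n} \<and> p i \<in> {j. j < n \<and> A i j = 0}}"
      using \<open>i \<in> {..<n}\<close> permutes_in_image[of _ "{0..<n}" i] by auto
    then show "(\<Sum>p\<in>?P. of_bool (A i (p i) = 0)) = card \<dots>"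
      by (simp add: finite_permutations)
  qed
  also have "\<dots> \<le> (\<Sum>i<n. k * fact (n - 1))"
  proof (rule sum_mono)
    fix i assume "i \<in> {..<n}"
    then show "card {p. p permutes {0..<n} \<and> p i \<in> {j. j < n \<and> A i j = 0}} \<le> k * fact (n - 1)"
      using rows by (subst card_permutes_value_in) auto
  qed
  also have "\<dots> \<le> k * fact n"
    by (cases n) (auto simp: algebra_simps)
  finally show ?thesis .
qed

definition swap_partners :: "(nat \<Rightarrow> nat \<Rightarrow> 'a::zero) \<Rightarrow> nat \<Rightarrow> (nat \<Rightarrow> nat) \<Rightarrow> nat \<Rightarrow> nat set" where
  "swap_partners A n p i =
     {i'. i' < n \<and> i' \<notin> zero_hits A n p \<and> A i (p i') \<noteq> 0 \<and> A i' (p i) \<noteq> 0}"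

lemma finite_swap_partners [simp]: "finite (swap_partners A n p i)"
  by (simp add: swap_partners_def)

lemma card_swap_partners_ge:
  assumes rows: "\<forall>i<n. card {j. j < n \<and> A i j = 0} \<le> k"
    and cols: "\<forall>j<n. card {i. i < n \<and> A i j = 0} \<le> k"
    and p: "p permutes {0..<n}" and i: "i \<in> zero_hits A n p"
  shows "n - card (zero_hits A n p) - 2 * (k - 1) \<le> card (swap_partners A n p i)"
proof -
  let ?X = "{i'. i' < n \<and> A i (p i') = 0}" and ?Y = "{i'. i' < n \<and> A i' (p i) = 0}"
  have i_hit: "i < n" "A i (p i) = 0" using i by (auto simp: zero_hits_def)
  then have "p i < n" using permutes_in_image[OF p, of i] by simp
  have "card ?X = card {j. j < n \<and> A i j = 0}"
    using card_permutes_preimage[OF p, of "\<lambda>j. A i j = 0"] by simp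
  then have "card (?X - {i}) \<le> k - 1"
    using rows[rule_format, OF \<open>i < n\<close>] i_hit by (simp add: card_Diff_singleton diff_le_mono)
  moreover have "card (?Y - {i}) \<le> k - 1"
    using cols[rule_format, OF \<open>p i < n\<close>] i_hit by (simp add: card_Diff_singleton diff_le_mono)
  ultimately have "card ((?X - {i}) \<union> (?Y - {i})) \<le> 2 * (k - 1)"
    using card_Un_le[of "?X - {i}" "?Y - {i}"] by linarith
  moreover have "card ({0..<n} - zero_hits A n p) = n - card (zero_hits A n p)"
    by (subst card_Diff_subset) (auto simp: zero_hits_def)
  ultimately have "n - card (zero_hits A n p) - 2 * (k - 1)
      \<le> card (({0..<n} - zero_hits A n p) - ((?X - {i}) \<union> (?Y - {i})))"
    using diff_card_le_card_Diff[of "(?X - {i}) \<union> (?Y - {i})" "{0..<n} - zero_hits A n p"]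
    by simp
  also have "\<dots> \<le> card (swap_partners A n p i)"
    by (rule card_mono) (use i in \<open>auto simp: swap_partners_def\<close>)
  finally show ?thesis .
qed

lemma zero_hits_swap:
  assumes "i \<in> zero_hits A n p" "i' \<in> swap_partners A n p i"
  shows "zero_hits A n (p \<circ> Transposition.transpose i i') = zero_hits A n p - {i}"
  using assms by (auto simp: zero_hits_def swap_partners_def transpose_def)

definition switches :: "(nat \<Rightarrow> nat \<Rightarrow> 'a::zero) \<Rightarrow> nat \<Rightarrow> nat \<Rightarrow> ((nat \<Rightarrow> nat) \<times> nat \<times> nat) set" where
  "switches A n m = (SIGMA p:perms_hitting A n m. SIGMA i:zero_hits A n p. swap_partners A n p i)"

lemma card_switches_ge:
  assumes rows: "\<forall>i<n. card {j. j < n \<and> A i j = 0} \<le> k"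
    and cols: "\<forall>j<n. card {i. i < n \<and> A i j = 0} \<le> k"
  shows "card (perms_hitting A n m) * (m * (n - m - 2 * (k - 1))) \<le> card (switches A n m)"
proof -
  have "card (perms_hitting A n m) * (m * (n - m - 2 * (k - 1)))
      = (\<Sum>p\<in>perms_hitting A n m. \<Sum>i\<in>zero_hits A n p. n - m - 2 * (k - 1))"
    by (simp add: perms_hitting_def)
  also have "\<dots> \<le> (\<Sum>p\<in>perms_hitting A n m. \<Sum>i\<in>zero_hits A n p. card (swap_partners A n p i))"
    using card_swap_partners_ge[OF rows cols]
    by (intro sum_mono) (auto simp: perms_hitting_def)
  also have "\<dots> = card (switches A n m)"
    by (simp add: switches_def)
  finally show ?thesis .
qed

lemma card_switches_le:
  assumes rows: "\<forall>i<n. card {j. j < n \<and> A i j = 0} \<le> k"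
  shows "card (switches A n m) \<le> card (perms_hitting A n (m - 1)) * (k * (n - m + 1))"
proof -
  let ?Q = "perms_hitting A n (m - 1)"
  define B where "B = (SIGMA q:?Q. SIGMA i:{0..<n} - zero_hits A n q. {i'. i' < n \<and> A i (q i') = 0})"
  let ?switch = "\<lambda>(p, i, i'). (p \<circ> Transposition.transpose i i', i, i')"
  have "card (switches A n m) \<le> card B"
  proof (rule card_inj_on_le)
    show "inj_on ?switch (switches A n m)"
      by (auto simp: inj_on_def) (metis comp_assoc comp_id transpose_comp_involutory)
    show "?switch ` switches A n m \<subseteq> B"
    proof clarify
      fix p i i' assume "(p, i, i') \<in> switches A n m"
      then have p: "p \<in> perms_hitting A n m" and i: "i \<in> zero_hits A n p"
        and i': "i' \<in> swap_partners A n p i"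
        by (auto simp: switches_def)
      then have "i' \<noteq> i" "i < n" "i' < n" "A i (p i) = 0"
        by (auto simp: zero_hits_def swap_partners_def)
      moreover have "p \<circ> Transposition.transpose i i' permutes {0..<n}"
        using p \<open>i < n\<close> \<open>i' < n\<close>
        by (auto simp: perms_hitting_def intro!: permutes_compose[OF permutes_swap_id])
      ultimately show "(p \<circ> Transposition.transpose i i', i, i') \<in> B"
        using p i zero_hits_swap[OF i i'] by (auto simp: B_def perms_hitting_def)
    qed
    show "finite B" by (simp add: B_def)
  qed
  also have "card B = (\<Sum>q\<in>?Q. \<Sum>i\<in>{0..<n} - zero_hits A n q. card {i'. i' < n \<and> A i (q i') = 0})"
    by (simp add: B_def)
  also have "\<dots> \<le> (\<Sum>q\<in>?Q. \<Sum>i\<in>{0..<n} - zero_hits A n q. k)"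
  proof (intro sum_mono)
    fix q i assume "q \<in> ?Q" "i \<in> {0..<n} - zero_hits A n q"
    then show "card {i'. i' < n \<and> A i (q i') = 0} \<le> k"
      using rows card_permutes_preimage[of q "{0..<n}" "\<lambda>j. A i j = 0"]
      by (auto simp: perms_hitting_def)
  qed
  also have "\<dots> \<le> (\<Sum>q\<in>?Q. (n - m + 1) * k)"
  proof (rule sum_mono)
    fix q assume "q \<in> ?Q"
    then have non_hits: "card ({0..<n} - zero_hits A n q) \<le> n - m + 1"
      by (subst card_Diff_subset) (auto simp: perms_hitting_def zero_hits_def)
    show "(\<Sum>i\<in>{0..<n} - zero_hits A n q. k) \<le> (n - m + 1) * k"
      using mult_le_mono1[OF non_hits, of k] by simp
  qed
  also have "\<dots> = card ?Q * (k * (n - m + 1))"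
    by (simp add: mult.commute)
  finally show ?thesis .
qed

lemma card_perms_hitting_switch:
  assumes rows: "\<forall>i<n. card {j. j < n \<and> A i j = 0} \<le> k"
    and cols: "\<forall>j<n. card {i. i < n \<and> A i j = 0} \<le> k"
  shows "card (perms_hitting A n m) * (m * (n - m - 2 * (k - 1)))
           \<le> card (perms_hitting A n (m - 1)) * (k * (n - m + 1))"
  using card_switches_ge[OF rows cols] card_switches_le[OF rows] by (rule order_trans)

lemma card_zeros_le_if_card_ones_ge:
  fixes f :: "nat \<Rightarrow> 'a::zero_neq_one"
  assumes "\<forall>j<n. f j = 0 \<or> f j = 1" and "card {j. j < n \<and> f j = 1} \<ge> n - k"
  shows "card {j. j < n \<and> f j = 0} \<le> k"
proof -
  have "{j. j < n \<and> f j = 0} = {0..<n} - {j. j < n \<and> f j = 1}"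
    using assms(1) by auto
  then have "card {j. j < n \<and> f j = 0} = n - card {j. j < n \<and> f j = 1}"
    by (simp add: card_Diff_subset subset_eq)
  then show ?thesis using assms(2) by linarith
qed

lemma prod_binary_permutes:
  fixes A :: "nat \<Rightarrow> nat \<Rightarrow> 'a::comm_semiring_1"
  assumes binary: "\<forall>i<n. \<forall>j<n. A i j = 0 \<or> A i j = 1" and p: "p permutes {0..<n}"
  shows "(\<Prod>i<n. A i (p i)) = (if zero_hits A n p = {} then 1 else 0)"
proof (cases "zero_hits A n p = {}")
  case True
  have "A i (p i) = 1" if "i < n" for i
    using binary True that permutes_in_image[OF p, of i] by (auto simp: zero_hits_def)
  then show ?thesis using True by simp
next
  case False
  then obtain i where "i < n" "A i (p i) = 0" by (auto simp: zero_hits_def)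
  then show ?thesis using False by (auto intro: prod_zero)
qed

lemma permanent_binary_eq_card_perms_hitting_0:
  assumes "\<forall>i<n. \<forall>j<n. A i j = 0 \<or> A i j = 1"
  shows "permanent n A = card (perms_hitting A n 0)"
proof -
  have "permanent n A = (\<Sum>p | p permutes {0..<n}. of_bool (zero_hits A n p = {}))"
    unfolding permanent_def using prod_binary_permutes[OF assms] by (intro sum.cong) auto
  also have "\<dots> = card (perms_hitting A n 0)"
    by (simp add: finite_permutations perms_hitting_def Int_def)
  finally show ?thesis .
qed

lemma sum_perms_hitting:
  "(\<Sum>m<K. f m * real (card (perms_hitting A n m)))
     = (\<Sum>p | p permutes {0..<n} \<and> card (zero_hits A n p) < K. f (card (zero_hits A n p)))"
proof -
  let ?S = "{p. p permutes {0..<n} \<and> card (zero_hits A n p) < K}"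
  have "finite ?S" by (simp add: finite_permutations)
  have "(\<Sum>m<K. f m * real (card (perms_hitting A n m)))
      = (\<Sum>m<K. \<Sum>p | p \<in> ?S \<and> card (zero_hits A n p) = m. f (card (zero_hits A n p)))"
  proof (rule sum.cong[OF refl])
    fix m assume "m \<in> {..<K}"
    then have "perms_hitting A n m = {p \<in> ?S. card (zero_hits A n p) = m}"
      by (auto simp: perms_hitting_def)
    then show "f m * real (card (perms_hitting A n m))
        = (\<Sum>p | p \<in> ?S \<and> card (zero_hits A n p) = m. f (card (zero_hits A n p)))"
      by simp
  qed
  also have "\<dots> = (\<Sum>p\<in>?S. f (card (zero_hits A n p)))"
    using \<open>finite ?S\<close> by (intro sum.group) auto
  finally show ?thesis .
qed

lemma sum_weighted_perms_hitting_ge: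
  assumes rows: "\<forall>i<n. card {j. j < n \<and> A i j = 0} \<le> k"
  shows "(real K - k) * fact n \<le> (\<Sum>m<K. (real K - m) * card (perms_hitting A n m))"
proof -
  let ?P = "{p. p permutes {0..<n}}" and ?h = "\<lambda>p. card (zero_hits A n p)"
  have "real (\<Sum>p\<in>?P. ?h p) \<le> k * fact n"
    using sum_card_zero_hits_le[OF rows] by (metis of_nat_fact of_nat_le_iff of_nat_mult)
  moreover have "real (card ?P) = fact n"
    using card_permutations[of "{0..<n}" n] by simp
  ultimately have "(real K - k) * fact n \<le> (\<Sum>p\<in>?P. real K - ?h p)"
    by (simp add: sum_subtractf algebra_simps)
  also have "\<dots> \<le> (\<Sum>p\<in>?P. if ?h p < K then real K - ?h p else 0)"
    by (intro sum_mono) auto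
  also have "\<dots> = (\<Sum>p | p \<in> ?P \<and> ?h p < K. real K - ?h p)"
    using sum.inter_filter[of ?P "\<lambda>p. real K - ?h p" "\<lambda>p. ?h p < K"]
    by (simp add: finite_permutations)
  also have "\<dots> = (\<Sum>m<K. (real K - m) * card (perms_hitting A n m))"
    by (simp add: sum_perms_hitting)
  finally show ?thesis .
qed

lemma le_power_div_fact_if_ratio_le:
  fixes x :: "nat \<Rightarrow> real"
  assumes ratio: "\<And>m. 1 \<le> m \<Longrightarrow> m \<le> M \<Longrightarrow> real m * x m \<le> c * x (m - 1)"
    and "c \<ge> 0" and "m \<le> M"
  shows "x m \<le> c ^ m / fact m * x 0"
  using \<open>m \<le> M\<close>
proof (induction m)
  case 0
  then show ?case by simp
next
  case (Suc m)
  have "real (Suc m) * x (Suc m) \<le> c * x m"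
    using ratio[of "Suc m"] Suc.prems by simp
  also have "\<dots> \<le> c * (c ^ m / fact m * x 0)"
    using Suc \<open>c \<ge> 0\<close> by (intro mult_left_mono) auto
  finally have "x (Suc m) * real (Suc m) \<le> c * (c ^ m / fact m * x 0)"
    by (simp add: mult.commute)
  moreover have "c ^ Suc m / fact (Suc m) * x 0 = c * (c ^ m / fact m * x 0) / real (Suc m)"
    by (simp add: field_simps)
  ultimately show ?case
    by (metis of_nat_0_less_iff pos_le_divide_eq zero_less_Suc)
qed

lemma perms_hitting_ratio_le:
  assumes rows: "\<forall>i<n. card {j. j < n \<and> A i j = 0} \<le> 2"
    and cols: "\<forall>j<n. card {i. i < n \<and> A i j = 0} \<le> 2"
    and "m + 394 \<le> n"
  shows "real m * card (perms_hitting A n m) \<le> 395 / 196 * card (perms_hitting A n (m - 1))"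
proof -
  let ?x = "real (card (perms_hitting A n m))" and ?y = "real (card (perms_hitting A n (m - 1)))"
  define t where "t = real (n - m - 2)"
  have t: "t \<ge> 392" "real (n - m + 1) = t + 3"
    using assms(3) by (auto simp: t_def)
  have "card (perms_hitting A n m) * (m * (n - m - 2))
      \<le> card (perms_hitting A n (m - 1)) * (2 * (n - m + 1))"
    using card_perms_hitting_switch[OF rows cols] by simp
  then have "real (card (perms_hitting A n m) * (m * (n - m - 2)))
      \<le> real (card (perms_hitting A n (m - 1)) * (2 * (n - m + 1)))"
    by (simp only: of_nat_le_iff)
  then have "?x * (real m * t) \<le> ?y * (2 * real (n - m + 1))"
    unfolding t_def by (simp only: of_nat_mult of_nat_numeral)
  also have "\<dots> = ?y * (2 * (t + 3))"
    using t(2) by simp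
  also have "\<dots> \<le> ?y * (395 / 196 * t)"
    \<comment> \<open>\<open>395/196 = 2 (392 + 3) / 392\<close>, and \<open>(t + 3) / t\<close> decreases in \<open>t\<close>\<close>
    using t(1) by (intro mult_left_mono) auto
  finally have "(real m * ?x) * t \<le> (395 / 196 * ?y) * t"
    by (simp add: algebra_simps)
  then show ?thesis
    using t(1) by simp
qed

lemma card_perms_hitting_le_power_div_fact:
  assumes rows: "\<forall>i<n. card {j. j < n \<and> A i j = 0} \<le> 2"
    and cols: "\<forall>j<n. card {i. i < n \<and> A i j = 0} \<le> 2"
    and "m + 394 \<le> n"
  shows "card (perms_hitting A n m) \<le> (395 / 196) ^ m / fact m * card (perms_hitting A n 0)"
  using le_power_div_fact_if_ratio_le[of m "\<lambda>m. real (card (perms_hitting A n m))" "395 / 196" m]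
    perms_hitting_ratio_le[OF rows cols] assms(3)
  by simp

theorem lemma14:
  fixes N :: nat and A :: "nat \<Rightarrow> nat \<Rightarrow> real"
  assumes "N \<ge> 400"
    and "\<forall>i<N. \<forall>j<N. A i j = 0 \<or> A i j = 1"
    and "\<forall>i<N. card {j. j < N \<and> A i j = 1} \<ge> N - 2"
    and "\<forall>j<N. card {i. i < N \<and> A i j = 1} \<ge> N - 2"
  shows "permanent N A > fact N / 7.5"
proof -
  have rows: "\<forall>i<N. card {j. j < N \<and> A i j = 0} \<le> 2"
    using assms(2,3) by (auto intro: card_zeros_le_if_card_ones_ge)
  have cols: "\<forall>j<N. card {i. i < N \<and> A i j = 0} \<le> 2"
    using assms(2,4) by (auto intro: card_zeros_le_if_card_ones_ge[where f = "\<lambda>i. A i j" for j])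
  define x where "x m = real (card (perms_hitting A N m))" for m
  define c :: real where "c = 395 / 196"
  define S where "S = (\<Sum>m<7. (7 - real m) * (c ^ m / fact m))"
  have "5 * fact N \<le> (\<Sum>m<7. (7 - real m) * x m)"
    using sum_weighted_perms_hitting_ge[OF rows, of 7] by (simp add: x_def)
  also have "\<dots> \<le> (\<Sum>m<7. (7 - real m) * (c ^ m / fact m * x 0))"
    using card_perms_hitting_le_power_div_fact[OF rows cols] assms(1)
    by (intro sum_mono mult_left_mono) (auto simp: x_def c_def)
  also have "\<dots> = S * x 0"
    by (simp add: S_def sum_distrib_right mult.assoc)
  finally have lower: "5 * fact N \<le> S * x 0" .
  have "0 < S * x 0"
    using lower fact_gt_zero[of N, where 'a = real] by linarith
  then have "x 0 > 0"
    by (auto simp: zero_less_mult_iff x_def)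
  moreover have "S < 75 / 2"
    by (simp add: S_def c_def lessThan_Suc eval_nat_numeral)
  ultimately have "S * x 0 < 75 / 2 * x 0"
    by (simp add: mult_strict_right_mono)
  with lower show ?thesis
    using permanent_binary_eq_card_perms_hitting_0[OF assms(2)] by (simp add: x_def)
qed

end
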